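(* Let $\alpha>1/2$, $d\in\mathbb N$, $1\ge\gamma_1\ge\dots\ge\gamma_d>0$, and $m\in\mathbb N_0$. Then $$K^\alpha_{2^{m-(d-1)},\boldsymbol\gamma,d}\subseteq Q^\alpha_{m,\boldsymbol\gamma,d}\subseteq K^\alpha_{2^m,\boldsymbol\gamma,d}.$$
   Context: For $\gamma>0$, $h\in\mathbb Z$: $r_\alpha(\gamma,h)=\max(|h|^{2\alpha}/\gamma,1)$, and $r_\alpha(\boldsymbol\gamma,\boldsymbol k)=\prod_{j=1}^dr_\alpha(\gamma_j,k_j)$ for $\boldsymbol k\in\mathbb Z^d$. For $\nu>0$, the weighted continuous hyperbolic cross is $K^\alpha_{\nu,\boldsymbol\gamma,d}=\{\boldsymbol k\in\mathbb Z^d:r_\alpha(\boldsymbol\gamma,\boldsymbol k)\le\nu\}$. The weighted step hyperbolic cross is $Q^\alpha_{m,\boldsymbol\gamma,d}=\bigcup_{\boldsymbol t\in\mathbb N_0^d,\ \|\boldsymbol t\|_1=m}\{\boldsymbol k\in\mathbb Z^d:r_\alpha(\gamma_j,k_j)\le2^{t_j}\ \forall j\in[d]\}$. *)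

theory Defs
  imports Complex_Main
begin

text \<open>Vectors in Z^d are represented as functions nat => int indexed by {1..d},
  vanishing outside {1..d}.\<close>

definition r_alpha :: "real \<Rightarrow> real \<Rightarrow> int \<Rightarrow> real" where
  "r_alpha \<alpha> g h = max (\<bar>real_of_int h\<bar> powr (2 * \<alpha>) / g) 1"

definition r_alpha_vec :: "real \<Rightarrow> nat \<Rightarrow> (nat \<Rightarrow> real) \<Rightarrow> (nat \<Rightarrow> int) \<Rightarrow> real" where
  "r_alpha_vec \<alpha> d \<gamma> k = (\<Prod>j = 1..d. r_alpha \<alpha> (\<gamma> j) (k j))"

definition lattice_vecs :: "nat \<Rightarrow> (nat \<Rightarrow> int) set" where
  "lattice_vecs d = {k. \<forall>j. j \<notin> {1..d} \<longrightarrow> k j = 0}"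

definition hypcross_K :: "real \<Rightarrow> real \<Rightarrow> (nat \<Rightarrow> real) \<Rightarrow> nat \<Rightarrow> (nat \<Rightarrow> int) set" where
  "hypcross_K \<alpha> \<nu> \<gamma> d = {k \<in> lattice_vecs d. r_alpha_vec \<alpha> d \<gamma> k \<le> \<nu>}"

definition hypcross_Q :: "real \<Rightarrow> nat \<Rightarrow> (nat \<Rightarrow> real) \<Rightarrow> nat \<Rightarrow> (nat \<Rightarrow> int) set" where
  "hypcross_Q \<alpha> m \<gamma> d = (\<Union>t \<in> {t :: nat \<Rightarrow> nat. (\<Sum>j = 1..d. t j) = m}.
      {k \<in> lattice_vecs d. \<forall>j \<in> {1..d}. r_alpha \<alpha> (\<gamma> j) (k j) \<le> 2 ^ t j})"

end

theory Submission
  imports Defs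
begin

text \<open>Every factor \<open>r\<^sub>\<alpha>(\<gamma>\<^sub>j, k\<^sub>j)\<close> is at least 1, so it lies in a dyadic interval
  \<open>2\<^bsup>t\<^sub>j - 1\<^esup> < r\<^sub>j \<le> 2\<^bsup>t\<^sub>j\<^esup>\<close>. Multiplying these,
  \<open>2\<^bsup>\<Sum>t\<^sub>j\<^esup> < 2\<^sup>d \<Prod>r\<^sub>j \<le> 2\<^bsup>m+1\<^esup>\<close> on the small continuous cross, so \<open>\<Sum>t\<^sub>j \<le> m\<close>, and
  enlarging one \<open>t\<^sub>j\<close> gives a level of exactly \<open>m\<close>. Conversely, on a block of level \<open>m\<close> the
  product is at most \<open>\<Prod>2\<^bsup>t\<^sub>j\<^esup> = 2\<^sup>m\<close>.\<close>

lemma r_alpha_ge_one: "1 \<le> r_alpha \<alpha> g h"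
  unfolding r_alpha_def by simp

lemma dyadic_bracket:
  fixes r :: real
  assumes "1 \<le> r"
  obtains t :: nat where "r \<le> 2 ^ t" and "2 ^ t < 2 * r"
proof -
  obtain n :: nat where "r < 2 ^ n"
    using real_arch_pow[of 2 r] by auto
  define t where "t = (LEAST t :: nat. r \<le> 2 ^ t)"
  have "r \<le> 2 ^ t"
    unfolding t_def by (rule LeastI[of _ n]) (use \<open>r < 2 ^ n\<close> in simp)
  moreover have "2 ^ t < 2 * r"
  proof (cases t)
    case 0
    then show ?thesis using assms by simp
  next
    case (Suc s)
    then have "\<not> r \<le> 2 ^ s"
      using not_less_Least[of s "\<lambda>t. r \<le> 2 ^ t"] unfolding t_def by auto
    then show ?thesis using Suc by simp
  qed
  ultimately show ?thesis using that by blast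
qed

lemma dyadic_exponents_sum_le:
  fixes f :: "'a \<Rightarrow> real"
  assumes "finite I" and "I \<noteq> {}" and ge_one: "\<And>i. i \<in> I \<Longrightarrow> 1 \<le> f i"
    and prod_le: "prod f I \<le> 2 powr (real m - (real (card I) - 1))"
  obtains t :: "'a \<Rightarrow> nat" where "sum t I \<le> m" and "\<And>i. i \<in> I \<Longrightarrow> f i \<le> 2 ^ t i"
proof -
  have "\<forall>i\<in>I. \<exists>s :: nat. f i \<le> 2 ^ s \<and> 2 ^ s < 2 * f i"
    using dyadic_bracket[OF ge_one] by metis
  then obtain t where t: "\<And>i. i \<in> I \<Longrightarrow> f i \<le> 2 ^ t i \<and> 2 ^ t i < 2 * f i"
    by metis
  obtain i where "i \<in> I" using \<open>I \<noteq> {}\<close> by blast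
  have "(2 :: real) ^ sum t I = (\<Prod>i\<in>I. 2 ^ t i)"
    by (rule power_sum)
  also have "\<dots> < (\<Prod>i\<in>I. 2 * f i)"
    using \<open>i \<in> I\<close> t \<open>finite I\<close> by (intro prod_mono_strict) (auto intro: less_imp_le dest: ge_one)
  also have "\<dots> = 2 powr real (card I) * prod f I"
    by (simp add: prod.distrib powr_realpow)
  also have "\<dots> \<le> 2 powr real (card I) * 2 powr (real m - (real (card I) - 1))"
    using prod_le by simp
  also have "\<dots> = 2 powr (real (m + 1))"
    by (simp add: add.commute flip: powr_add)
  also have "\<dots> = 2 ^ (m + 1)"
    by (rule powr_realpow) simp
  finally have "sum t I < m + 1"
    by (rule power_less_imp_less_exp [rotated]) simp
  then show ?thesis
    using that t by (simp add: less_Suc_eq_le)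
qed

lemma sum_raise_to:
  fixes t :: "'a \<Rightarrow> nat"
  assumes "finite I" and "i \<in> I" and "sum t I \<le> m"
  obtains t' where "sum t' I = m" and "\<And>j. t j \<le> t' j"
proof
  define t' where "t' j = t j + (if j = i then m - sum t I else 0)" for j
  show "sum t' I = m"
    using assms by (simp add: t'_def sum.distrib)
  show "t j \<le> t' j" for j
    by (simp add: t'_def)
qed

lemma prod_le_power_sum:
  fixes f :: "'a \<Rightarrow> 'b :: linordered_semidom"
  assumes "\<And>i. i \<in> I \<Longrightarrow> 0 \<le> f i \<and> f i \<le> b ^ t i"
  shows "prod f I \<le> b ^ sum t I"
  unfolding power_sum using assms by (rule prod_mono)

lemma hypcross_K_subset_Q:
  assumes "d \<ge> 1"
  shows "hypcross_K \<alpha> (2 powr (real m - (real d - 1))) \<gamma> d \<subseteq> hypcross_Q \<alpha> m \<gamma> d"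
proof
  fix k assume "k \<in> hypcross_K \<alpha> (2 powr (real m - (real d - 1))) \<gamma> d"
  then have k: "k \<in> lattice_vecs d"
    and prod_le: "(\<Prod>j = 1..d. r_alpha \<alpha> (\<gamma> j) (k j)) \<le> 2 powr (real m - (real d - 1))"
    unfolding hypcross_K_def r_alpha_vec_def by auto
  obtain t where "sum t {1..d} \<le> m" and t: "\<And>j. j \<in> {1..d} \<Longrightarrow> r_alpha \<alpha> (\<gamma> j) (k j) \<le> 2 ^ t j"
    using dyadic_exponents_sum_le[of "{1..d}" "\<lambda>j. r_alpha \<alpha> (\<gamma> j) (k j)" m] assms prod_le
    by (auto simp: r_alpha_ge_one)
  then obtain t' where "sum t' {1..d} = m" and "\<And>j. t j \<le> t' j"
    using sum_raise_to[of "{1..d}" 1 t m] assms by auto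
  moreover have "r_alpha \<alpha> (\<gamma> j) (k j) \<le> 2 ^ t' j" if "j \<in> {1..d}" for j
    using t[OF that] power_increasing[OF \<open>t j \<le> t' j\<close>, of "2 :: real"] by linarith
  ultimately show "k \<in> hypcross_Q \<alpha> m \<gamma> d"
    unfolding hypcross_Q_def using k by blast
qed

lemma hypcross_Q_subset_K: "hypcross_Q \<alpha> m \<gamma> d \<subseteq> hypcross_K \<alpha> (2 ^ m) \<gamma> d"
proof
  fix k assume "k \<in> hypcross_Q \<alpha> m \<gamma> d"
  then obtain t where "sum t {1..d} = m" and k: "k \<in> lattice_vecs d"
    and t: "\<And>j. j \<in> {1..d} \<Longrightarrow> r_alpha \<alpha> (\<gamma> j) (k j) \<le> 2 ^ t j"
    unfolding hypcross_Q_def by auto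
  have "r_alpha_vec \<alpha> d \<gamma> k \<le> 2 ^ sum t {1..d}"
    unfolding r_alpha_vec_def
    using t r_alpha_ge_one by (intro prod_le_power_sum) (auto intro: order_trans[OF zero_le_one])
  then show "k \<in> hypcross_K \<alpha> (2 ^ m) \<gamma> d"
    unfolding hypcross_K_def using k \<open>sum t {1..d} = m\<close> by auto
qed

theorem lemma3p17:
  fixes \<alpha> :: real and d m :: nat and \<gamma> :: "nat \<Rightarrow> real"
  assumes "\<alpha> > 1/2" and "d \<ge> 1"
    and "\<gamma> 1 \<le> 1"
    and "\<And>i j. 1 \<le> i \<Longrightarrow> i \<le> j \<Longrightarrow> j \<le> d \<Longrightarrow> \<gamma> j \<le> \<gamma> i"
    and "\<gamma> d > 0"
  shows "hypcross_K \<alpha> (2 powr (real m - (real d - 1))) \<gamma> d \<subseteq> hypcross_Q \<alpha> m \<gamma> d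
       \<and> hypcross_Q \<alpha> m \<gamma> d \<subseteq> hypcross_K \<alpha> (2 ^ m) \<gamma> d"
  using hypcross_K_subset_Q[OF \<open>d \<ge> 1\<close>] hypcross_Q_subset_K by blast

end
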